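(* Let $y\in\{1,\dots,C\}^N$ be node labels with exactly $K=N/C$ nodes in each class, and let $\mathcal G_r=(\mathcal V,\mathcal E_r)$, $r=1,\dots,R$, be independent random undirected graphs on the common node set $\mathcal V=\{1,\dots,N\}$, with $\mathcal N_r(i)=\{j:(i,j)\in\mathcal E_r\}$. Assume that in each graph $\mathcal G_r$ the events $\{(i,j)\in\mathcal E_r\}$ are independent across unordered node pairs $\{i,j\}$, and that $\mathbb P[(i,j)\in\mathcal E_r]\le q$ whenever $y_i\neq y_j$. Then $$\mathbb P\Big[\bigcap_{i=1}^N\bigcup_{r=1}^R\{y_j=y_i\ \text{for all } j\in\mathcal N_r(i)\}\Big]\ \ge\ \Big(1-\Big(1-(1-q)^{\frac{N(C-1)}{C}}\Big)^R\Big)^N.$$ *)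

theory Defs
  imports "HOL-Probability.Probability"
begin

definition nbrs :: "(nat \<times> nat) set \<Rightarrow> nat \<Rightarrow> nat set" where
  "nbrs E i = {j. (i, j) \<in> E}"

end

theory Submission
  imports Defs
begin

(* Record, over all graphs r and all node pairs e, whether e is an edge of graph r: by the two
   independence assumptions this random subset of {1..R} \<times> pairs has a product Bernoulli law.
   Node i is good iff some graph has no edge from i to the N - K nodes of other labels, which
   fails in graph r with probability at most 1 - (1 - q)^(N - K). Goodness of i is a decreasing
   property of the edge set, so by the Harris inequality the N good events are positively
   correlated, and the probability that all nodes are good is at least the product of the
   single-node bounds. *)

definition bernoulli_weight :: "'x set \<Rightarrow> ('x \<Rightarrow> real) \<Rightarrow> 'x set \<Rightarrow> real" where
  "bernoulli_weight X p S = (\<Prod>x\<in>X. if x \<in> S then p x else 1 - p x)"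

definition bernoulli_prob :: "'x set \<Rightarrow> ('x \<Rightarrow> real) \<Rightarrow> 'x set set \<Rightarrow> real" where
  "bernoulli_prob X p A = (\<Sum>S\<in>Pow X \<inter> A. bernoulli_weight X p S)"

definition down_closed :: "'x set set \<Rightarrow> bool" where
  "down_closed A \<longleftrightarrow> (\<forall>S T. S \<in> A \<longrightarrow> T \<subseteq> S \<longrightarrow> T \<in> A)"

lemma bernoulli_weight_nonneg: "p ` X \<subseteq> {0..1} \<Longrightarrow> 0 \<le> bernoulli_weight X p S"
  unfolding bernoulli_weight_def by (intro prod_nonneg) auto

lemma bernoulli_prob_nonneg: "p ` X \<subseteq> {0..1} \<Longrightarrow> 0 \<le> bernoulli_prob X p A"
  unfolding bernoulli_prob_def by (intro sum_nonneg bernoulli_weight_nonneg)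

lemma bernoulli_prob_mono:
  "finite X \<Longrightarrow> p ` X \<subseteq> {0..1} \<Longrightarrow> A \<subseteq> B \<Longrightarrow> bernoulli_prob X p A \<le> bernoulli_prob X p B"
  unfolding bernoulli_prob_def by (intro sum_mono2 bernoulli_weight_nonneg) auto

lemma bernoulli_prob_insert:
  assumes "finite X" "a \<notin> X"
  shows "bernoulli_prob (insert a X) p A
    = (1 - p a) * bernoulli_prob X p A + p a * bernoulli_prob X p {S. insert a S \<in> A}"
proof -
  let ?w = "bernoulli_weight (insert a X) p"
  let ?A' = "Pow X \<inter> {S. insert a S \<in> A}"
  have split: "Pow (insert a X) \<inter> A = (Pow X \<inter> A) \<union> insert a ` ?A'"
    by (auto simp: Pow_insert)
  have inj: "inj_on (insert a) ?A'"
    using assms(2) unfolding inj_on_def by (auto simp: insert_ident)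
  have weight_out: "?w S = (1 - p a) * bernoulli_weight X p S" if "S \<subseteq> X" for S
    using that assms unfolding bernoulli_weight_def by (auto simp: prod.insert)
  have weight_in: "?w (insert a S) = p a * bernoulli_weight X p S" if "S \<subseteq> X" for S
  proof -
    have "bernoulli_weight X p (insert a S) = bernoulli_weight X p S"
      unfolding bernoulli_weight_def using assms by (intro prod.cong) auto
    then show ?thesis unfolding bernoulli_weight_def using assms by simp
  qed
  have "bernoulli_prob (insert a X) p A = (\<Sum>S\<in>Pow X \<inter> A. ?w S) + (\<Sum>S\<in>insert a ` ?A'. ?w S)"
    unfolding bernoulli_prob_def split using assms by (intro sum.union_disjoint) auto
  also have "(\<Sum>S\<in>insert a ` ?A'. ?w S) = (\<Sum>S\<in>?A'. ?w (insert a S))"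
    using inj by (simp add: sum.reindex)
  finally show ?thesis
    by (simp add: bernoulli_prob_def sum_distrib_left weight_out weight_in)
qed

lemma bernoulli_prob_UNIV: "finite X \<Longrightarrow> bernoulli_prob X p UNIV = 1"
  by (induction X rule: finite_induct)
    (simp add: bernoulli_prob_def bernoulli_weight_def, simp add: bernoulli_prob_insert)

lemma two_point_chebyshev:
  fixes p a0 a1 b0 b1 :: real
  assumes "0 \<le> p" "p \<le> 1" "a1 \<le> a0" "b1 \<le> b0"
  shows "((1 - p) * a0 + p * a1) * ((1 - p) * b0 + p * b1) \<le> (1 - p) * (a0 * b0) + p * (a1 * b1)"
proof -
  have "(1 - p) * (a0 * b0) + p * (a1 * b1) - ((1 - p) * a0 + p * a1) * ((1 - p) * b0 + p * b1)
      = p * (1 - p) * ((a0 - a1) * (b0 - b1))"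
    by (simp add: algebra_simps)
  moreover have "0 \<le> p * (1 - p) * ((a0 - a1) * (b0 - b1))"
    using assms by (intro mult_nonneg_nonneg) auto
  ultimately show ?thesis by linarith
qed

lemma down_closed_insert_section: "down_closed A \<Longrightarrow> down_closed {S. insert a S \<in> A}"
  unfolding down_closed_def by (blast intro: insert_mono)

lemma down_closed_Inter: "(\<And>i. i \<in> I \<Longrightarrow> down_closed (A i)) \<Longrightarrow> down_closed (\<Inter>i\<in>I. A i)"
  unfolding down_closed_def by blast

theorem harris_inequality:
  assumes "finite X" "p ` X \<subseteq> {0..1}" "down_closed A" "down_closed B"
  shows "bernoulli_prob X p A * bernoulli_prob X p B \<le> bernoulli_prob X p (A \<inter> B)"
  using assms
proof (induction X arbitrary: A B rule: finite_induct)
  case empty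
  then show ?case by (simp add: bernoulli_prob_def bernoulli_weight_def Pow_empty Int_insert_left)
next
  case (insert a X)
  define A' where "A' = {S. insert a S \<in> A}"
  define B' where "B' = {S. insert a S \<in> B}"
  have p: "p ` X \<subseteq> {0..1}" "0 \<le> p a" "p a \<le> 1" using insert.prems by auto
  have "A' \<subseteq> A" "B' \<subseteq> B"
    using insert.prems(2,3) unfolding down_closed_def A'_def B'_def
    by (blast intro: subset_insertI)+
  then have mono: "bernoulli_prob X p A' \<le> bernoulli_prob X p A"
    "bernoulli_prob X p B' \<le> bernoulli_prob X p B"
    using insert.hyps(1) p(1) by (auto intro: bernoulli_prob_mono)
  have IH: "bernoulli_prob X p A * bernoulli_prob X p B \<le> bernoulli_prob X p (A \<inter> B)"
    "bernoulli_prob X p A' * bernoulli_prob X p B' \<le> bernoulli_prob X p (A' \<inter> B')"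
    unfolding A'_def B'_def
    by (intro insert.IH p(1) insert.prems(2,3) down_closed_insert_section)+
  have "bernoulli_prob (insert a X) p A * bernoulli_prob (insert a X) p B
      = ((1 - p a) * bernoulli_prob X p A + p a * bernoulli_prob X p A')
        * ((1 - p a) * bernoulli_prob X p B + p a * bernoulli_prob X p B')"
    using insert.hyps by (simp add: bernoulli_prob_insert A'_def B'_def)
  also have "\<dots> \<le> (1 - p a) * (bernoulli_prob X p A * bernoulli_prob X p B)
      + p a * (bernoulli_prob X p A' * bernoulli_prob X p B')"
    using p mono by (intro two_point_chebyshev)
  also have "\<dots> \<le> (1 - p a) * bernoulli_prob X p (A \<inter> B) + p a * bernoulli_prob X p (A' \<inter> B')"
    using p IH by (intro add_mono mult_left_mono) auto
  also have "\<dots> = bernoulli_prob (insert a X) p (A \<inter> B)"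
    using insert.hyps by (simp add: bernoulli_prob_insert A'_def B'_def Collect_conj_eq)
  finally show ?case .
qed

corollary harris_inequality_prod:
  assumes "finite X" "p ` X \<subseteq> {0..1}" "finite I" "\<And>i. i \<in> I \<Longrightarrow> down_closed (A i)"
  shows "(\<Prod>i\<in>I. bernoulli_prob X p (A i)) \<le> bernoulli_prob X p (\<Inter>i\<in>I. A i)"
  using assms(3,4)
proof (induction I rule: finite_induct)
  case empty
  then show ?case using assms(1) by (simp add: bernoulli_prob_UNIV)
next
  case (insert i I)
  have "(\<Prod>i\<in>insert i I. bernoulli_prob X p (A i))
      \<le> bernoulli_prob X p (A i) * bernoulli_prob X p (\<Inter>i\<in>I. A i)"
    using insert assms by (simp add: mult_left_mono bernoulli_prob_nonneg prod_nonneg)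
  also have "\<dots> \<le> bernoulli_prob X p (A i \<inter> (\<Inter>i\<in>I. A i))"
    using insert.prems assms by (intro harris_inequality down_closed_Inter) auto
  finally show ?case by simp
qed

context prob_space
begin

lemma prob_indep_events_literals:
  assumes indep: "indep_events E I" and J: "finite J" "J \<subseteq> I"
  shows "prob {\<omega>\<in>space M. \<forall>x\<in>J. (\<omega> \<in> E x) = b x}
       = (\<Prod>x\<in>J. if b x then prob (E x) else 1 - prob (E x))"
proof (cases "J = {}")
  case True
  then show ?thesis by (simp add: prob_space)
next
  case False
  have events: "E x \<in> events" if "x \<in> I" for x
    using indep that by (auto simp: indep_events_def)
  have indep_sigma: "indep_sets (\<lambda>x. sigma_sets (space M) {E x}) I"
    using indep unfolding indep_events_def_alt
    by (rule indep_sets_sigma) (auto simp: Int_stable_def)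
  define F where "F x = (if b x then E x else space M - E x)" for x
  have "{\<omega>\<in>space M. \<forall>x\<in>J. (\<omega> \<in> E x) = b x} = (\<Inter>x\<in>J. F x)"
  proof (intro set_eqI iffI)
    fix \<omega> assume "\<omega> \<in> (\<Inter>x\<in>J. F x)"
    moreover obtain x0 where "x0 \<in> J" using False by blast
    moreover have "F x0 \<subseteq> space M"
      using \<open>x0 \<in> J\<close> J events[THEN sets.sets_into_space] by (auto simp: F_def)
    ultimately have "\<omega> \<in> space M" by blast
    with \<open>\<omega> \<in> (\<Inter>x\<in>J. F x)\<close> show "\<omega> \<in> {\<omega>\<in>space M. \<forall>x\<in>J. (\<omega> \<in> E x) = b x}"
      unfolding F_def by (auto split: if_splits)
  qed (auto simp: F_def)
  moreover have "prob (\<Inter>x\<in>J. F x) = (\<Prod>x\<in>J. prob (F x))"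
    using J False
    by (intro indep_setsD[OF indep_sigma]) (auto simp: F_def intro: sigma_sets.Compl sigma_sets.Basic)
  moreover have "prob (F x) = (if b x then prob (E x) else 1 - prob (E x))" if "x \<in> J" for x
    using that J events[of x] by (auto simp: F_def prob_compl)
  ultimately show ?thesis by simp
qed

lemma prob_random_subset:
  assumes X: "finite X" and events: "\<And>x. x \<in> X \<Longrightarrow> E x \<in> events"
    and law: "\<And>S. S \<subseteq> X \<Longrightarrow> prob {\<omega>\<in>space M. {x\<in>X. \<omega> \<in> E x} = S} = bernoulli_weight X p S"
  shows "prob {\<omega>\<in>space M. {x\<in>X. \<omega> \<in> E x} \<in> A} = bernoulli_prob X p A"
proof -
  let ?Z = "\<lambda>\<omega>. {x\<in>X. \<omega> \<in> E x}"
  have level_sets: "{\<omega>\<in>space M. ?Z \<omega> = S} \<in> events" if "S \<subseteq> X" for S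
  proof -
    have "{\<omega>\<in>space M. ?Z \<omega> = S} = {\<omega>\<in>space M. \<forall>x\<in>X. (\<omega> \<in> E x) = (x \<in> S)}"
      using that by auto
    also have "\<dots> \<in> events"
      using X events
      by (intro sets.sets_Collect_finite_All)
        (auto simp: Collect_conj_eq Int_def[symmetric] Diff_eq[symmetric])
    finally show ?thesis .
  qed
  have "{\<omega>\<in>space M. ?Z \<omega> \<in> A} = (\<Union>S\<in>Pow X \<inter> A. {\<omega>\<in>space M. ?Z \<omega> = S})"
    by auto
  then have "prob {\<omega>\<in>space M. ?Z \<omega> \<in> A} = (\<Sum>S\<in>Pow X \<inter> A. prob {\<omega>\<in>space M. ?Z \<omega> = S})"
    using X level_sets by (auto intro!: finite_measure_finite_Union simp: disjoint_family_on_def)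
  also have "\<dots> = bernoulli_prob X p A"
    unfolding bernoulli_prob_def using law by (intro sum.cong) auto
  finally show ?thesis .
qed

lemma prob_ex_indep_vars:
  assumes indep: "indep_vars M' X I" and I: "finite I"
    and A: "\<And>i. i \<in> I \<Longrightarrow> A i \<in> sets (M' i)"
  shows "prob {\<omega>\<in>space M. \<exists>i\<in>I. X i \<omega> \<in> A i}
       = 1 - (\<Prod>i\<in>I. 1 - prob {\<omega>\<in>space M. X i \<omega> \<in> A i})"
proof (cases "I = {}")
  case True
  then show ?thesis by simp
next
  case False
  have X: "X i \<in> measurable M (M' i)" if "i \<in> I" for i
    using indep that by (auto simp: indep_vars_def)
  define B where "B i = X i -` (space (M' i) - A i) \<inter> space M" for i
  have B_events: "B i \<in> events" if "i \<in> I" for i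
    using X[OF that] A[OF that] unfolding B_def by (auto intro: measurable_sets)
  have prob_B: "prob (B i) = 1 - prob {\<omega>\<in>space M. X i \<omega> \<in> A i}" if "i \<in> I" for i
  proof -
    have "{\<omega>\<in>space M. X i \<omega> \<in> A i} = X i -` A i \<inter> space M" by auto
    then have "{\<omega>\<in>space M. X i \<omega> \<in> A i} \<in> events"
      using X[OF that] A[OF that] by (auto intro: measurable_sets)
    moreover have "B i = space M - {\<omega>\<in>space M. X i \<omega> \<in> A i}"
      using measurable_space[OF X[OF that]] unfolding B_def by auto
    ultimately show ?thesis by (simp add: prob_compl)
  qed
  have "{\<omega>\<in>space M. \<exists>i\<in>I. X i \<omega> \<in> A i} = space M - (\<Inter>i\<in>I. B i)"
    using False measurable_space[OF X] unfolding B_def by auto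
  then have "prob {\<omega>\<in>space M. \<exists>i\<in>I. X i \<omega> \<in> A i} = 1 - prob (\<Inter>i\<in>I. B i)"
    using False I B_events by (simp add: prob_compl sets.finite_INT)
  also have "prob (\<Inter>i\<in>I. B i) = (\<Prod>i\<in>I. prob (B i))"
    unfolding B_def using False I A by (intro indep_varsD[OF indep]) auto
  finally show ?thesis
    using prob_B by simp
qed

end

locale independent_random_graphs = prob_space +
  fixes Er :: "nat \<Rightarrow> 'a \<Rightarrow> (nat \<times> nat) set" and N R :: nat
  assumes graphs_indep: "indep_vars (\<lambda>_. count_space UNIV) Er {1..R}"
    and edges_indep: "r \<in> {1..R} \<Longrightarrow>
      indep_events (\<lambda>e. {\<omega>\<in>space M. e \<in> Er r \<omega>}) {(i, j). 1 \<le> i \<and> i < j \<and> j \<le> N}"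
begin

definition node_pairs :: "(nat \<times> nat) set" where
  "node_pairs = {(i, j). 1 \<le> i \<and> i < j \<and> j \<le> N}"

definition edge_event :: "nat \<Rightarrow> nat \<times> nat \<Rightarrow> 'a set" where
  "edge_event r e = {\<omega>\<in>space M. e \<in> Er r \<omega>}"

definition edge_prob :: "nat \<times> nat \<times> nat \<Rightarrow> real" where
  "edge_prob x = prob (edge_event (fst x) (snd x))"

definition present_edges :: "'a \<Rightarrow> (nat \<times> nat \<times> nat) set" where
  "present_edges \<omega> = {(r, e)\<in>{1..R} \<times> node_pairs. e \<in> Er r \<omega>}"

lemma finite_node_pairs: "finite node_pairs"
  by (rule finite_subset[of _ "{1..N} \<times> {1..N}"]) (auto simp: node_pairs_def)

lemma graph_measurable: "r \<in> {1..R} \<Longrightarrow> Er r \<in> measurable M (count_space UNIV)"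
  using graphs_indep by (auto simp: indep_vars_def)

lemma edge_event_in_events:
  assumes "r \<in> {1..R}"
  shows "edge_event r e \<in> events"
proof -
  have "edge_event r e = Er r -` {E. e \<in> E} \<inter> space M"
    by (auto simp: edge_event_def)
  then show ?thesis
    using measurable_sets[OF graph_measurable[OF assms], of "{E. e \<in> E}"] by simp
qed

lemma indep_edge_events: "r \<in> {1..R} \<Longrightarrow> indep_events (edge_event r) node_pairs"
  using edges_indep unfolding node_pairs_def edge_event_def[abs_def] .

lemma prob_present_edges_eq:
  assumes "S \<subseteq> {1..R} \<times> node_pairs"
  shows "prob {\<omega>\<in>space M. present_edges \<omega> = S}
       = bernoulli_weight ({1..R} \<times> node_pairs) edge_prob S"
proof (cases "R = 0")
  case True
  then show ?thesis
    using assms unfolding present_edges_def by (simp add: prob_space bernoulli_weight_def)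
next
  case False
  define B where "B r = {E. \<forall>e\<in>node_pairs. (e \<in> E) = ((r, e) \<in> S)}" for r
  have "{\<omega>\<in>space M. present_edges \<omega> = S}
      = (\<Inter>r\<in>{1..R}. Er r -` B r \<inter> space M)"
  proof (intro set_eqI iffI)
    fix \<omega> assume "\<omega> \<in> (\<Inter>r\<in>{1..R}. Er r -` B r \<inter> space M)"
    moreover have "1 \<in> {1..R}" using False by simp
    ultimately show "\<omega> \<in> {\<omega>\<in>space M. present_edges \<omega> = S}"
      using assms by (auto simp: B_def present_edges_def)
  qed (auto simp: B_def present_edges_def)
  moreover have "prob (\<Inter>r\<in>{1..R}. Er r -` B r \<inter> space M)
      = (\<Prod>r\<in>{1..R}. prob (Er r -` B r \<inter> space M))"
    using False by (intro indep_varsD[OF graphs_indep]) auto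
  moreover have "prob (Er r -` B r \<inter> space M)
      = (\<Prod>e\<in>node_pairs. if (r, e) \<in> S then edge_prob (r, e) else 1 - edge_prob (r, e))"
    if "r \<in> {1..R}" for r
  proof -
    have "Er r -` B r \<inter> space M
        = {\<omega>\<in>space M. \<forall>e\<in>node_pairs. (\<omega> \<in> edge_event r e) = ((r, e) \<in> S)}"
      by (auto simp: B_def edge_event_def)
    also have "prob \<dots>
        = (\<Prod>e\<in>node_pairs. if (r, e) \<in> S then prob (edge_event r e) else 1 - prob (edge_event r e))"
      by (rule prob_indep_events_literals[OF indep_edge_events[OF that] finite_node_pairs order_refl])
    finally show ?thesis by (simp add: edge_prob_def cong: if_cong)
  qed
  ultimately show ?thesis
    by (simp add: bernoulli_weight_def prod.cartesian_product)
qed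

lemma prob_present_edges_in:
  "prob {\<omega>\<in>space M. present_edges \<omega> \<in> A} = bernoulli_prob ({1..R} \<times> node_pairs) edge_prob A"
proof -
  let ?Z = "\<lambda>\<omega>. {x\<in>{1..R} \<times> node_pairs. \<omega> \<in> edge_event (fst x) (snd x)}"
  have Z: "{\<omega>\<in>space M. P (?Z \<omega>)} = {\<omega>\<in>space M. P (present_edges \<omega>)}" for P
  proof -
    have "?Z \<omega> = present_edges \<omega>" if "\<omega> \<in> space M" for \<omega>
      using that by (auto simp: present_edges_def edge_event_def)
    then show ?thesis by auto
  qed
  have "prob {\<omega>\<in>space M. ?Z \<omega> \<in> A} = bernoulli_prob ({1..R} \<times> node_pairs) edge_prob A"
  proof (rule prob_random_subset)
    show "finite ({1..R} \<times> node_pairs)"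
      using finite_node_pairs by simp
    show "edge_event (fst x) (snd x) \<in> events" if "x \<in> {1..R} \<times> node_pairs" for x
      using that by (auto intro: edge_event_in_events)
    show "prob {\<omega>\<in>space M. ?Z \<omega> = S} = bernoulli_weight ({1..R} \<times> node_pairs) edge_prob S"
      if "S \<subseteq> {1..R} \<times> node_pairs" for S
      using prob_present_edges_eq[OF that] Z[of "\<lambda>Z. Z = S"] by simp
  qed
  then show ?thesis
    using Z[of "\<lambda>Z. Z \<in> A"] by simp
qed

lemma prob_some_graph_avoids:
  assumes F: "F \<subseteq> node_pairs" "card F \<le> m" and q: "0 \<le> q" "q \<le> 1"
    and edge_le: "\<And>r e. r \<in> {1..R} \<Longrightarrow> e \<in> F \<Longrightarrow> prob (edge_event r e) \<le> q"
  shows "1 - (1 - (1 - q) ^ m) ^ R \<le> prob {\<omega>\<in>space M. \<exists>r\<in>{1..R}. Er r \<omega> \<inter> F = {}}"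
proof -
  let ?avoids = "\<lambda>r. {\<omega>\<in>space M. Er r \<omega> \<in> {E. E \<inter> F = {}}}"
  have avoids: "(1 - q) ^ m \<le> prob (?avoids r)" if r: "r \<in> {1..R}" for r
  proof -
    have "(1 - q) ^ m \<le> (1 - q) ^ card F"
      using F(2) q by (intro power_decreasing) auto
    also have "\<dots> = (\<Prod>e\<in>F. 1 - q)"
      by simp
    also have "\<dots> \<le> (\<Prod>e\<in>F. 1 - prob (edge_event r e))"
      using q edge_le[OF r] by (intro prod_mono) auto
    also have "\<dots> = prob {\<omega>\<in>space M. \<forall>e\<in>F. (\<omega> \<in> edge_event r e) = False}"
      using prob_indep_events_literals[OF indep_edge_events[OF r]
          finite_subset[OF F(1) finite_node_pairs] F(1), of "\<lambda>_. False"]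
      by simp
    also have "{\<omega>\<in>space M. \<forall>e\<in>F. (\<omega> \<in> edge_event r e) = False} = ?avoids r"
      by (auto simp: edge_event_def)
    finally show ?thesis .
  qed
  have "(\<Prod>r\<in>{1..R}. 1 - prob (?avoids r)) \<le> (\<Prod>r\<in>{1..R}. 1 - (1 - q) ^ m)"
    using avoids by (intro prod_mono) auto
  moreover have "prob {\<omega>\<in>space M. \<exists>r\<in>{1..R}. Er r \<omega> \<in> {E. E \<inter> F = {}}}
      = 1 - (\<Prod>r\<in>{1..R}. 1 - prob (?avoids r))"
    by (rule prob_ex_indep_vars[OF graphs_indep]) auto
  ultimately show ?thesis
    by simp
qed

lemma prob_all_some_graph_avoids:
  assumes I: "finite I"
    and F: "\<And>i. i \<in> I \<Longrightarrow> F i \<subseteq> node_pairs" "\<And>i. i \<in> I \<Longrightarrow> card (F i) \<le> m"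
    and q: "0 \<le> q" "q \<le> 1"
    and edge_le: "\<And>r i e. r \<in> {1..R} \<Longrightarrow> i \<in> I \<Longrightarrow> e \<in> F i \<Longrightarrow> prob (edge_event r e) \<le> q"
  shows "(1 - (1 - (1 - q) ^ m) ^ R) ^ card I
    \<le> prob {\<omega>\<in>space M. \<forall>i\<in>I. \<exists>r\<in>{1..R}. Er r \<omega> \<inter> F i = {}}"
proof -
  let ?X = "{1..R} \<times> node_pairs" and ?b = "1 - (1 - (1 - q) ^ m) ^ R"
  define A where "A i = {S. \<exists>r\<in>{1..R}. \<forall>e\<in>F i. (r, e) \<notin> S}" for i
  have A_events: "{\<omega>\<in>space M. present_edges \<omega> \<in> A i}
      = {\<omega>\<in>space M. \<exists>r\<in>{1..R}. Er r \<omega> \<inter> F i = {}}" if "i \<in> I" for i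
    using F(1)[OF that] by (auto simp: A_def present_edges_def)
  have "0 \<le> ?b"
    using q by (simp add: power_le_one)
  moreover have "?b \<le> prob {\<omega>\<in>space M. present_edges \<omega> \<in> A i}" if "i \<in> I" for i
    unfolding A_events[OF that]
    using F[OF that] q edge_le[OF _ that] by (rule prob_some_graph_avoids)
  ultimately have "?b ^ card I \<le> (\<Prod>i\<in>I. prob {\<omega>\<in>space M. present_edges \<omega> \<in> A i})"
    using prod_mono[of I "\<lambda>_. ?b"] by simp
  also have "\<dots> = (\<Prod>i\<in>I. bernoulli_prob ?X edge_prob (A i))"
    by (simp add: prob_present_edges_in)
  also have "\<dots> \<le> bernoulli_prob ?X edge_prob (\<Inter>i\<in>I. A i)"
    using I finite_node_pairs
    by (intro harris_inequality_prod) (auto simp: edge_prob_def down_closed_def A_def)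
  also have "\<dots> = prob {\<omega>\<in>space M. present_edges \<omega> \<in> (\<Inter>i\<in>I. A i)}"
    by (rule prob_present_edges_in[symmetric])
  also have "{\<omega>\<in>space M. present_edges \<omega> \<in> (\<Inter>i\<in>I. A i)}
      = {\<omega>\<in>space M. \<forall>i\<in>I. \<exists>r\<in>{1..R}. Er r \<omega> \<inter> F i = {}}"
    using A_events by blast
  finally show ?thesis .
qed

end

definition other_label_pairs :: "(nat \<Rightarrow> nat) \<Rightarrow> nat \<Rightarrow> nat \<Rightarrow> (nat \<times> nat) set" where
  "other_label_pairs y N i = (\<lambda>j. (min i j, max i j)) ` {j\<in>{1..N}. y j \<noteq> y i}"

lemma other_label_pairs_subset:
  "i \<in> {1..N} \<Longrightarrow> other_label_pairs y N i \<subseteq> {(i, j). 1 \<le> i \<and> i < j \<and> j \<le> N}"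
  by (auto simp: other_label_pairs_def min_def max_def intro: le_neq_trans)

lemma card_other_label_pairs:
  assumes "\<forall>i\<in>{1..N}. y i \<in> {1..C}" "\<forall>c\<in>{1..C}. card {i\<in>{1..N}. y i = c} = K" "i \<in> {1..N}"
  shows "card (other_label_pairs y N i) \<le> N - K"
proof -
  have "{j\<in>{1..N}. y j \<noteq> y i} = {1..N} - {j\<in>{1..N}. y j = y i}"
    by auto
  moreover have "card ({1..N} - {j\<in>{1..N}. y j = y i}) = N - card {j\<in>{1..N}. y j = y i}"
    by (subst card_Diff_subset) auto
  moreover have "card {j\<in>{1..N}. y j = y i} = K"
    using assms by simp
  ultimately have "card {j\<in>{1..N}. y j \<noteq> y i} = N - K"
    by simp
  then show ?thesis
    unfolding other_label_pairs_def using card_image_le[of "{j\<in>{1..N}. y j \<noteq> y i}"] by simp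
qed

lemma nbrs_same_label_iff:
  assumes "E \<subseteq> {1..N} \<times> {1..N}" and sym: "\<And>i j. (i, j) \<in> E \<longleftrightarrow> (j, i) \<in> E"
  shows "(\<forall>j\<in>nbrs E i. y j = y i) \<longleftrightarrow> E \<inter> other_label_pairs y N i = {}"
proof -
  have min_max: "(min i j, max i j) \<in> E \<longleftrightarrow> (i, j) \<in> E" for j
    using sym by (cases "i \<le> j") (auto simp: min_def max_def)
  show ?thesis
  proof
    assume "\<forall>j\<in>nbrs E i. y j = y i"
    then show "E \<inter> other_label_pairs y N i = {}"
      using min_max by (auto simp: nbrs_def other_label_pairs_def)
  next
    assume avoid: "E \<inter> other_label_pairs y N i = {}"
    show "\<forall>j\<in>nbrs E i. y j = y i"
    proof
      fix j assume "j \<in> nbrs E i"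
      then have "(i, j) \<in> E" "j \<in> {1..N}"
        using assms(1) by (auto simp: nbrs_def)
      then show "y j = y i"
        using avoid min_max unfolding other_label_pairs_def by blast
    qed
  qed
qed

theorem proposition2:
  fixes M :: "'a measure"
    and Er :: "nat \<Rightarrow> 'a \<Rightarrow> (nat \<times> nat) set"
    and y :: "nat \<Rightarrow> nat"
    and N C K R :: nat
    and q :: real
  assumes P: "prob_space M"
    and C_pos: "C \<ge> 1"
    and NKC: "N = K * C"
    and labels: "\<forall>i\<in>{1..N}. y i \<in> {1..C}"
    and balanced: "\<forall>c\<in>{1..C}. card {i\<in>{1..N}. y i = c} = K"
    and q_range: "0 \<le> q" "q \<le> 1"
    and graph_rv: "\<forall>r\<in>{1..R}. Er r \<in> measurable M (count_space UNIV)"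
    and on_nodes: "\<forall>r\<in>{1..R}. \<forall>\<omega>\<in>space M. Er r \<omega> \<subseteq> {1..N} \<times> {1..N}"
    and undirected: "\<forall>r\<in>{1..R}. \<forall>\<omega>\<in>space M. \<forall>i j. (i, j) \<in> Er r \<omega> \<longleftrightarrow> (j, i) \<in> Er r \<omega>"
    and graphs_indep: "prob_space.indep_vars M (\<lambda>_. count_space UNIV) Er {1..R}"
    and edges_indep: "\<forall>r\<in>{1..R}. prob_space.indep_events M
         (\<lambda>p. {\<omega>\<in>space M. p \<in> Er r \<omega>}) {(i, j). 1 \<le> i \<and> i < j \<and> j \<le> N}"
    and inter_prob: "\<forall>r\<in>{1..R}. \<forall>i\<in>{1..N}. \<forall>j\<in>{1..N}. y i \<noteq> y j \<longrightarrow>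
         measure M {\<omega>\<in>space M. (i, j) \<in> Er r \<omega>} \<le> q"
  shows "measure M {\<omega>\<in>space M. \<forall>i\<in>{1..N}. \<exists>r\<in>{1..R}.
             \<forall>j\<in>nbrs (Er r \<omega>) i. y j = y i}
         \<ge> (1 - (1 - (1 - q) ^ (N * (C - 1) div C)) ^ R) ^ N"
proof -
  interpret independent_random_graphs M Er N R
    using graphs_indep edges_indep
    by (intro independent_random_graphs.intro[OF P]) (simp add: independent_random_graphs_axioms_def)
  let ?F = "other_label_pairs y N"
  have "(\<forall>j\<in>nbrs (Er r \<omega>) i. y j = y i) \<longleftrightarrow> Er r \<omega> \<inter> ?F i = {}"
    if "r \<in> {1..R}" "\<omega> \<in> space M" for r \<omega> i
    using on_nodes undirected that by (intro nbrs_same_label_iff) blast+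
  then have event: "{\<omega>\<in>space M. \<forall>i\<in>{1..N}. \<exists>r\<in>{1..R}. \<forall>j\<in>nbrs (Er r \<omega>) i. y j = y i}
      = {\<omega>\<in>space M. \<forall>i\<in>{1..N}. \<exists>r\<in>{1..R}. Er r \<omega> \<inter> ?F i = {}}"
    by blast
  have F_pairs: "?F i \<subseteq> node_pairs" if "i \<in> {1..N}" for i
    using other_label_pairs_subset[OF that] by (simp add: node_pairs_def)
  have edge_le: "prob (edge_event r e) \<le> q" if "r \<in> {1..R}" "i \<in> {1..N}" "e \<in> ?F i" for r i e
    using that inter_prob by (auto simp: other_label_pairs_def edge_event_def min_def max_def)
  have "N * (C - 1) div C = K * (C - 1) * C div C"
    using NKC by (simp add: mult_ac)
  also have "\<dots> = N - K"
    using NKC C_pos by (simp add: diff_mult_distrib2)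
  finally show ?thesis
    using prob_all_some_graph_avoids[of "{1..N}" ?F "N - K" q] F_pairs edge_le event q_range
      card_other_label_pairs[OF labels balanced]
    by simp
qed

end
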